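(* Let $A$ be an infinitesimal Hopf algebra with counit $\varepsilon$ and antipode $S$, and let $\mathrm{Prim}(A)=\{x\in A:\Delta(x)=x\otimes 1+1\otimes x\}$. Then $\mathrm{Ker}(\varepsilon)=\mathrm{Prim}(A)\oplus \mathrm{Ker}(\varepsilon)^2$, and the projection of $\mathrm{Ker}(\varepsilon)$ onto $\mathrm{Prim}(A)$ along $\mathrm{Ker}(\varepsilon)^2$ in this direct sum is (the restriction of) $-S$.
   Context: An infinitesimal bialgebra over a field $K$ is a $K$-vector space $A$ that is an associative unital algebra (product $m$, unit $1$) and a coassociative counital coalgebra (coproduct $\Delta$, counit $\varepsilon$) such that for all $a,b\in A$: $\Delta(ab)=\Delta(a)(1\otimes b)+(a\otimes 1)\Delta(b)-a\otimes b$. On the space $\mathcal{L}(A)$ of linear endomorphisms of $A$, the convolution product is $f\star g=m\circ(f\otimes g)\circ\Delta$, with unit $\nu\circ\varepsilon$, where $\nu(\lambda)=\lambda 1$. $A$ is an infinitesimal Hopf algebra if $\mathrm{Id}_A$ has an inverse $S$ for $\star$; $S$ is called the antipode. $\mathrm{Ker}(\varepsilon)^2$ denotes the linear span of products $xy$ with $x,y\in\mathrm{Ker}(\varepsilon)$. *)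

theory Defs
  imports Complex_Main
begin

definition unital_algebra :: "('k::field \<Rightarrow> 'a::ring_1 \<Rightarrow> 'a) \<Rightarrow> bool" where
  "unital_algebra scale \<longleftrightarrow> vector_space scale \<and>
     (\<forall>c a b. scale c (a * b) = scale c a * b \<and> scale c (a * b) = a * scale c b)"

text \<open>Elements of A\<otimes>A (resp. A\<otimes>A\<otimes>A) are represented by finite lists of simple
 tensors; two representations denote the same tensor iff all bilinear (resp.
 trilinear) forms agree on them (bilinear forms separate points of A\<otimes>A over a field).\<close>
definition bilinear_form :: "('k::field \<Rightarrow> 'a::ab_group_add \<Rightarrow> 'a) \<Rightarrow> ('a \<Rightarrow> 'a \<Rightarrow> 'k) \<Rightarrow> bool" where
  "bilinear_form scale \<beta> \<longleftrightarrow>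
     (\<forall>y. Vector_Spaces.linear scale (*) (\<lambda>x. \<beta> x y)) \<and>
     (\<forall>x. Vector_Spaces.linear scale (*) (\<lambda>y. \<beta> x y))"

definition trilinear_form :: "('k::field \<Rightarrow> 'a::ab_group_add \<Rightarrow> 'a) \<Rightarrow> ('a \<Rightarrow> 'a \<Rightarrow> 'a \<Rightarrow> 'k) \<Rightarrow> bool" where
  "trilinear_form scale \<tau> \<longleftrightarrow>
     (\<forall>y z. Vector_Spaces.linear scale (*) (\<lambda>x. \<tau> x y z)) \<and>
     (\<forall>x z. Vector_Spaces.linear scale (*) (\<lambda>y. \<tau> x y z)) \<and>
     (\<forall>x y. Vector_Spaces.linear scale (*) (\<lambda>z. \<tau> x y z))"

definition teq2 :: "('k::field \<Rightarrow> 'a::ab_group_add \<Rightarrow> 'a) \<Rightarrow> ('a \<times> 'a) list \<Rightarrow> ('a \<times> 'a) list \<Rightarrow> bool" where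
  "teq2 scale xs ys \<longleftrightarrow> (\<forall>\<beta>. bilinear_form scale \<beta> \<longrightarrow>
     (\<Sum>(x,y)\<leftarrow>xs. \<beta> x y) = (\<Sum>(x,y)\<leftarrow>ys. \<beta> x y))"

definition teq3 :: "('k::field \<Rightarrow> 'a::ab_group_add \<Rightarrow> 'a) \<Rightarrow> ('a \<times> 'a \<times> 'a) list \<Rightarrow> ('a \<times> 'a \<times> 'a) list \<Rightarrow> bool" where
  "teq3 scale xs ys \<longleftrightarrow> (\<forall>\<tau>. trilinear_form scale \<tau> \<longrightarrow>
     (\<Sum>(x,y,z)\<leftarrow>xs. \<tau> x y z) = (\<Sum>(x,y,z)\<leftarrow>ys. \<tau> x y z))"

text \<open>Infinitesimal bialgebra: unital algebra, coassociative counital coalgebra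
 (coproduct \<Delta> :: A \<Rightarrow> A\<otimes>A linear, counit \<epsilon> linear), and the infinitesimal
 compatibility \<Delta>(ab) = \<Delta>(a)(1\<otimes>b) + (a\<otimes>1)\<Delta>(b) - a\<otimes>b.\<close>
definition inf_bialgebra ::
  "('k::field \<Rightarrow> 'a::ring_1 \<Rightarrow> 'a) \<Rightarrow> ('a \<Rightarrow> ('a \<times> 'a) list) \<Rightarrow> ('a \<Rightarrow> 'k) \<Rightarrow> bool" where
  "inf_bialgebra scale \<Delta> \<epsilon> \<longleftrightarrow>
     unital_algebra scale \<and>
     (\<forall>a b. teq2 scale (\<Delta> (a + b)) (\<Delta> a @ \<Delta> b)) \<and>
     (\<forall>c a. teq2 scale (\<Delta> (scale c a)) (map (\<lambda>(x,y). (scale c x, y)) (\<Delta> a))) \<and>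
     Vector_Spaces.linear scale (*) \<epsilon> \<and>
     (\<forall>a. teq3 scale
        (concat (map (\<lambda>(x,y). map (\<lambda>(u,v). (u,v,y)) (\<Delta> x)) (\<Delta> a)))
        (concat (map (\<lambda>(x,y). map (\<lambda>(u,v). (x,u,v)) (\<Delta> y)) (\<Delta> a)))) \<and>
     (\<forall>a. (\<Sum>(x,y)\<leftarrow>\<Delta> a. scale (\<epsilon> x) y) = a) \<and>
     (\<forall>a. (\<Sum>(x,y)\<leftarrow>\<Delta> a. scale (\<epsilon> y) x) = a) \<and>
     (\<forall>a b. teq2 scale (\<Delta> (a * b))
        (map (\<lambda>(x,y). (x, y * b)) (\<Delta> a) @ map (\<lambda>(x,y). (a * x, y)) (\<Delta> b) @ [(- a, b)]))"

definition conv :: "('a \<Rightarrow> ('a \<times> 'a) list) \<Rightarrow> ('a \<Rightarrow> 'a) \<Rightarrow> ('a \<Rightarrow> 'a) \<Rightarrow> 'a \<Rightarrow> 'a::ring_1" where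
  "conv \<Delta> f g a = (\<Sum>(x,y)\<leftarrow>\<Delta> a. f x * g y)"

definition is_antipode ::
  "('k::field \<Rightarrow> 'a::ring_1 \<Rightarrow> 'a) \<Rightarrow> ('a \<Rightarrow> ('a \<times> 'a) list) \<Rightarrow> ('a \<Rightarrow> 'k) \<Rightarrow> ('a \<Rightarrow> 'a) \<Rightarrow> bool" where
  "is_antipode scale \<Delta> \<epsilon> S \<longleftrightarrow> Vector_Spaces.linear scale scale S \<and>
     (\<forall>a. conv \<Delta> S id a = scale (\<epsilon> a) 1) \<and> (\<forall>a. conv \<Delta> id S a = scale (\<epsilon> a) 1)"

definition Prim :: "('k::field \<Rightarrow> 'a::ring_1 \<Rightarrow> 'a) \<Rightarrow> ('a \<Rightarrow> ('a \<times> 'a) list) \<Rightarrow> 'a set" where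
  "Prim scale \<Delta> = {x. teq2 scale (\<Delta> x) [(x, 1), (1, x)]}"

definition Ker_eps :: "('a \<Rightarrow> 'k::zero) \<Rightarrow> 'a set" where
  "Ker_eps \<epsilon> = {x. \<epsilon> x = 0}"

definition Ker_eps_sq :: "('k::field \<Rightarrow> 'a::ring_1 \<Rightarrow> 'a) \<Rightarrow> ('a \<Rightarrow> 'k) \<Rightarrow> 'a set" where
  "Ker_eps_sq scale \<epsilon> = module.span scale {x * y | x y. x \<in> Ker_eps \<epsilon> \<and> y \<in> Ker_eps \<epsilon>}"

end

theory Submission
  imports Defs
begin

text \<open>Three identities of the antipode carry the argument. If \<open>\<epsilon>(a) = 0\<close> then
  \<open>S(ab) = \<epsilon>(b) S(a)\<close>, so \<open>S\<close> vanishes on \<open>Ker(\<epsilon>)\<^sup>2\<close>, while \<open>S = -Id\<close> on primitives;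
  hence the two summands meet only in \<open>0\<close>. For \<open>\<epsilon>(k) = 0\<close>, expanding
  \<open>\<Sum> (k\<^sub>1 - \<epsilon>(k\<^sub>1) 1) S(k\<^sub>2 - \<epsilon>(k\<^sub>2) 1)\<close> gives \<open>k + S k \<in> Ker(\<epsilon>)\<^sup>2\<close>. Finally
  \<open>\<Delta>(S k) = S k \<otimes> 1 + 1 \<otimes> S k - \<epsilon>(k) 1 \<otimes> 1\<close>, obtained by writing \<open>S k = \<Sum> S(k\<^sub>1) k\<^sub>2 S(k\<^sub>3)\<close>
  and applying the infinitesimal Leibniz rule to \<open>S(k\<^sub>1) k\<^sub>2\<close>; so \<open>-S k\<close> is primitive and
  \<open>k = (-S k) + (k + S k)\<close> is the decomposition.\<close>

lemmas linear_map_add = module_hom.add[OF module_hom_linearI]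
  and linear_map_scale = module_hom.scale[OF module_hom_linearI]
  and linear_map_neg = module_hom.neg[OF module_hom_linearI]
  and linear_map_diff = module_hom.diff[OF module_hom_linearI]
  and linear_map_zero = module_hom.zero[OF module_hom_linearI]

lemma linear_map_sum_list:
  assumes "Vector_Spaces.linear s1 s2 f"
  shows "f (\<Sum>x\<leftarrow>xs. g x) = (\<Sum>x\<leftarrow>xs. f (g x))"
  by (induct xs) (simp_all add: linear_map_add[OF assms] linear_map_zero[OF assms])

lemma sum_list_map_concat:
  "(\<Sum>x\<leftarrow>concat xss. f x) = (\<Sum>xs\<leftarrow>xss. \<Sum>x\<leftarrow>xs. f x)"
  by (induct xss) simp_all

lemma linear_map_compose:
  "Vector_Spaces.linear s1 s2 f \<Longrightarrow> Vector_Spaces.linear s2 s3 g \<Longrightarrow>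
   Vector_Spaces.linear s1 s3 (\<lambda>x. g (f x))"
  using Vector_Spaces.linear_compose[of s1 s2 f s3 g] by (simp add: o_def)

lemma vector_space_field_self: "vector_space ((*) :: 'k::field \<Rightarrow> 'k \<Rightarrow> 'k)"
  by unfold_locales (simp_all add: algebra_simps)

context vector_space
begin

lemma scale_sum_list_right: "scale c (\<Sum>x\<leftarrow>xs. g x) = (\<Sum>x\<leftarrow>xs. scale c (g x))"
  by (induct xs) (simp_all add: scale_right_distrib)

lemma scale_sum_list_left: "scale (\<Sum>x\<leftarrow>xs. f x) v = (\<Sum>x\<leftarrow>xs. scale (f x) v)"
  by (induct xs) (simp_all add: scale_left_distrib)

lemma span_sum_list: "(\<And>x. x \<in> set xs \<Longrightarrow> f x \<in> span A) \<Longrightarrow> (\<Sum>x\<leftarrow>xs. f x) \<in> span A"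
  by (induct xs) (simp_all add: span_zero span_add)

lemma eq_if_linear_functionals_eq:
  assumes "\<And>\<phi>. Vector_Spaces.linear scale (*) \<phi> \<Longrightarrow> \<phi> u = \<phi> w"
  shows "u = w"
proof (rule ccontr)
  assume "u \<noteq> w"
  then have "independent {u - w}"
    by (intro independent_insertI) (auto simp: independent_empty)
  then obtain B where B: "independent B" "span B = UNIV" "u - w \<in> B"
    using independent_extend_basis span_extend_basis extend_basis_superset by blast
  define \<phi> where "\<phi> x = representation B x (u - w)" for x
  have lin: "Vector_Spaces.linear scale (*) \<phi>"
    unfolding \<phi>_def by (rule linear_representation[OF B(1,2)])
  have "\<phi> (u - w) = 1"
    using representation_basis[OF B(1,3)] by (simp add: \<phi>_def)
  moreover have "\<phi> (u - w) = 0"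
    using assms[OF lin] linear_map_diff[OF lin] by simp
  ultimately show False by simp
qed

end

definition bilinear_map ::
  "('k::field \<Rightarrow> 'a::ab_group_add \<Rightarrow> 'a) \<Rightarrow> ('k \<Rightarrow> 'c::ab_group_add \<Rightarrow> 'c) \<Rightarrow> ('a \<Rightarrow> 'a \<Rightarrow> 'c) \<Rightarrow> bool"
  where "bilinear_map sa s B \<longleftrightarrow>
    (\<forall>y. Vector_Spaces.linear sa s (\<lambda>x. B x y)) \<and> (\<forall>x. Vector_Spaces.linear sa s (\<lambda>y. B x y))"

definition trilinear_map ::
  "('k::field \<Rightarrow> 'a::ab_group_add \<Rightarrow> 'a) \<Rightarrow> ('k \<Rightarrow> 'c::ab_group_add \<Rightarrow> 'c) \<Rightarrow> ('a \<Rightarrow> 'a \<Rightarrow> 'a \<Rightarrow> 'c) \<Rightarrow> bool"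
  where "trilinear_map sa s T \<longleftrightarrow>
    (\<forall>y z. Vector_Spaces.linear sa s (\<lambda>x. T x y z)) \<and> (\<forall>x z. Vector_Spaces.linear sa s (\<lambda>y. T x y z)) \<and>
    (\<forall>x y. Vector_Spaces.linear sa s (\<lambda>z. T x y z))"

lemma bilinear_mapI:
  "(\<And>y. Vector_Spaces.linear sa s (\<lambda>x. B x y)) \<Longrightarrow> (\<And>x. Vector_Spaces.linear sa s (\<lambda>y. B x y)) \<Longrightarrow>
   bilinear_map sa s B"
  by (simp add: bilinear_map_def)

lemma trilinear_mapI:
  "(\<And>y z. Vector_Spaces.linear sa s (\<lambda>x. T x y z)) \<Longrightarrow> (\<And>x z. Vector_Spaces.linear sa s (\<lambda>y. T x y z)) \<Longrightarrow>
   (\<And>x y. Vector_Spaces.linear sa s (\<lambda>z. T x y z)) \<Longrightarrow> trilinear_map sa s T"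
  by (simp add: trilinear_map_def)

lemma bilinear_map_linear_left: "bilinear_map sa s B \<Longrightarrow> Vector_Spaces.linear sa s (\<lambda>x. B x y)"
  and bilinear_map_linear_right: "bilinear_map sa s B \<Longrightarrow> Vector_Spaces.linear sa s (\<lambda>y. B x y)"
  by (simp_all add: bilinear_map_def)

lemma bilinear_form_iff_bilinear_map: "bilinear_form sa \<beta> \<longleftrightarrow> bilinear_map sa (*) \<beta>"
  by (simp add: bilinear_form_def bilinear_map_def)

text \<open>Tensor equalities are tested only against scalar-valued forms; since linear functionals
  separate points, they also hold against multilinear maps into any vector space.\<close>

lemma teq2_sum_eq:
  assumes "teq2 sa xs ys" and "vector_space s" and B: "bilinear_map sa s B"
  shows "(\<Sum>(x,y)\<leftarrow>xs. B x y) = (\<Sum>(x,y)\<leftarrow>ys. B x y)"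
proof (rule vector_space.eq_if_linear_functionals_eq[OF \<open>vector_space s\<close>])
  fix \<phi> assume \<phi>: "Vector_Spaces.linear s (*) \<phi>"
  have "bilinear_form sa (\<lambda>x y. \<phi> (B x y))"
    using B \<phi> unfolding bilinear_map_def bilinear_form_def by (auto intro!: linear_map_compose[OF _ \<phi>])
  then have "(\<Sum>(x,y)\<leftarrow>xs. \<phi> (B x y)) = (\<Sum>(x,y)\<leftarrow>ys. \<phi> (B x y))"
    using assms(1) unfolding teq2_def by blast
  then show "\<phi> (\<Sum>(x,y)\<leftarrow>xs. B x y) = \<phi> (\<Sum>(x,y)\<leftarrow>ys. B x y)"
    by (simp add: linear_map_sum_list[OF \<phi>] split_def)
qed

lemma teq3_sum_eq:
  assumes "teq3 sa xs ys" and "vector_space s" and T: "trilinear_map sa s T"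
  shows "(\<Sum>(x,y,z)\<leftarrow>xs. T x y z) = (\<Sum>(x,y,z)\<leftarrow>ys. T x y z)"
proof (rule vector_space.eq_if_linear_functionals_eq[OF \<open>vector_space s\<close>])
  fix \<phi> assume \<phi>: "Vector_Spaces.linear s (*) \<phi>"
  have "trilinear_form sa (\<lambda>x y z. \<phi> (T x y z))"
    using T \<phi> unfolding trilinear_map_def trilinear_form_def by (auto intro!: linear_map_compose[OF _ \<phi>])
  then have "(\<Sum>(x,y,z)\<leftarrow>xs. \<phi> (T x y z)) = (\<Sum>(x,y,z)\<leftarrow>ys. \<phi> (T x y z))"
    using assms(1) unfolding teq3_def by blast
  then show "\<phi> (\<Sum>(x,y,z)\<leftarrow>xs. T x y z) = \<phi> (\<Sum>(x,y,z)\<leftarrow>ys. T x y z)"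
    by (simp add: linear_map_sum_list[OF \<phi>] split_def)
qed

locale infinitesimal_hopf =
  fixes scale :: "'k::field \<Rightarrow> 'a::ring_1 \<Rightarrow> 'a"
    and \<Delta> :: "'a \<Rightarrow> ('a \<times> 'a) list" and \<epsilon> :: "'a \<Rightarrow> 'k" and S :: "'a \<Rightarrow> 'a"
  assumes bialgebra: "inf_bialgebra scale \<Delta> \<epsilon>"
    and antipode: "is_antipode scale \<Delta> \<epsilon> S"
begin

sublocale vs: vector_space scale
  using bialgebra unfolding inf_bialgebra_def unital_algebra_def by blast

lemma scale_mult_left: "scale c (a * b) = scale c a * b"
  and scale_mult_right: "scale c (a * b) = a * scale c b"
  using bialgebra unfolding inf_bialgebra_def unital_algebra_def by blast+

lemma coproduct_add_teq2: "teq2 scale (\<Delta> (a + b)) (\<Delta> a @ \<Delta> b)"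
  and coproduct_scale_teq2: "teq2 scale (\<Delta> (scale c a)) (map (\<lambda>(x,y). (scale c x, y)) (\<Delta> a))"
  and coproduct_mult_teq2: "teq2 scale (\<Delta> (a * b))
        (map (\<lambda>(x,y). (x, y * b)) (\<Delta> a) @ map (\<lambda>(x,y). (a * x, y)) (\<Delta> b) @ [(- a, b)])"
  and coassoc_teq3: "teq3 scale
        (concat (map (\<lambda>(x,y). map (\<lambda>(u,v). (u,v,y)) (\<Delta> x)) (\<Delta> a)))
        (concat (map (\<lambda>(x,y). map (\<lambda>(u,v). (x,u,v)) (\<Delta> y)) (\<Delta> a)))"
  and counit_linear: "Vector_Spaces.linear scale (*) \<epsilon>"
  and counit_left: "(\<Sum>(x,y)\<leftarrow>\<Delta> a. scale (\<epsilon> x) y) = a"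
  and counit_right: "(\<Sum>(x,y)\<leftarrow>\<Delta> a. scale (\<epsilon> y) x) = a"
  using bialgebra unfolding inf_bialgebra_def by blast+

lemma antipode_linear: "Vector_Spaces.linear scale scale S"
  and antipode_left: "(\<Sum>(x,y)\<leftarrow>\<Delta> a. S x * y) = scale (\<epsilon> a) 1"
  and antipode_right: "(\<Sum>(x,y)\<leftarrow>\<Delta> a. x * S y) = scale (\<epsilon> a) 1"
  using antipode by (simp_all add: is_antipode_def conv_def)

lemma counit_left_linear:
  assumes "Vector_Spaces.linear scale s f"
  shows "(\<Sum>(x,y)\<leftarrow>\<Delta> a. s (\<epsilon> x) (f y)) = f a"
  using arg_cong[OF counit_left[of a], of f]
  by (simp add: linear_map_sum_list[OF assms] linear_map_scale[OF assms] split_def)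

lemma counit_right_linear:
  assumes "Vector_Spaces.linear scale s f"
  shows "(\<Sum>(x,y)\<leftarrow>\<Delta> a. s (\<epsilon> y) (f x)) = f a"
  using arg_cong[OF counit_right[of a], of f]
  by (simp add: linear_map_sum_list[OF assms] linear_map_scale[OF assms] split_def)

lemma linear_mult_right: "Vector_Spaces.linear scale scale (\<lambda>z. z * y)"
  by (simp add: Vector_Spaces.linear_iff vs.vector_space_axioms distrib_right scale_mult_left)

lemma linear_mult_left: "Vector_Spaces.linear scale scale (\<lambda>z. y * z)"
  by (simp add: Vector_Spaces.linear_iff vs.vector_space_axioms distrib_left scale_mult_right)

lemma linear_counit_scale_left: "Vector_Spaces.linear scale scale (\<lambda>x. scale (\<epsilon> x) y)"
  by (simp add: Vector_Spaces.linear_iff vs.vector_space_axioms linear_map_add[OF counit_linear]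
      linear_map_scale[OF counit_linear] vs.scale_left_distrib)

lemma linear_iff_scalar:
  "Vector_Spaces.linear scale (*) f \<longleftrightarrow> (\<forall>x y. f (x + y) = f x + f y) \<and> (\<forall>c x. f (scale c x) = c * f x)"
  by (simp add: Vector_Spaces.linear_iff vs.vector_space_axioms vector_space_field_self)

context
  fixes s :: "'k \<Rightarrow> 'c::ab_group_add \<Rightarrow> 'c" and B :: "'a \<Rightarrow> 'a \<Rightarrow> 'c"
  assumes vs: "vector_space s" and B: "bilinear_map scale s B"
begin

lemma coproduct_add:
  "(\<Sum>(x,y)\<leftarrow>\<Delta> (a + b). B x y) = (\<Sum>(x,y)\<leftarrow>\<Delta> a. B x y) + (\<Sum>(x,y)\<leftarrow>\<Delta> b. B x y)"
  using teq2_sum_eq[OF coproduct_add_teq2 vs B] by simp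

lemma coproduct_scale: "(\<Sum>(x,y)\<leftarrow>\<Delta> (scale c a). B x y) = s c (\<Sum>(x,y)\<leftarrow>\<Delta> a. B x y)"
proof -
  have "(\<Sum>(x,y)\<leftarrow>\<Delta> (scale c a). B x y) = (\<Sum>(x,y)\<leftarrow>\<Delta> a. B (scale c x) y)"
    using teq2_sum_eq[OF coproduct_scale_teq2 vs B] by (simp add: o_def split_def)
  also have "\<dots> = (\<Sum>(x,y)\<leftarrow>\<Delta> a. s c (B x y))"
    by (simp add: linear_map_scale[OF bilinear_map_linear_left[OF B]] split_def)
  finally show ?thesis
    by (simp add: vector_space.scale_sum_list_right[OF vs] split_def)
qed

lemma coproduct_linear: "Vector_Spaces.linear scale s (\<lambda>c. \<Sum>(x,y)\<leftarrow>\<Delta> c. B x y)"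
  using vs coproduct_add coproduct_scale
  by (simp add: Vector_Spaces.linear_iff vs.vector_space_axioms)

lemma coproduct_mult:
  "(\<Sum>(x,y)\<leftarrow>\<Delta> (a * b). B x y) =
   (\<Sum>(x,y)\<leftarrow>\<Delta> a. B x (y * b)) + (\<Sum>(x,y)\<leftarrow>\<Delta> b. B (a * x) y) - B a b"
  using teq2_sum_eq[OF coproduct_mult_teq2 vs B]
  by (simp add: o_def split_def linear_map_neg[OF bilinear_map_linear_left[OF B]])

lemma coproduct_one: "(\<Sum>(x,y)\<leftarrow>\<Delta> 1. B x y) = B 1 1"
  using coproduct_mult[of 1 1] by simp

end

lemma coproduct_coassoc:
  assumes "vector_space s" and "trilinear_map scale s T"
  shows "(\<Sum>(x,y)\<leftarrow>\<Delta> a. \<Sum>(u,v)\<leftarrow>\<Delta> x. T u v y) = (\<Sum>(x,y)\<leftarrow>\<Delta> a. \<Sum>(u,v)\<leftarrow>\<Delta> y. T x u v)"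
  using teq3_sum_eq[OF coassoc_teq3 assms, of a]
  by (simp add: sum_list_map_concat o_def split_def)

lemma counit_one: "\<epsilon> 1 = 1"
proof -
  have "bilinear_map scale scale (\<lambda>x y. scale (\<epsilon> x) y)"
    by (rule bilinear_mapI[OF linear_counit_scale_left vs.linear_scale_self])
  then have "scale (\<epsilon> 1) 1 = (1::'a)"
    using coproduct_one[OF vs.vector_space_axioms] counit_left[of 1] by simp
  then have "scale (\<epsilon> 1 - 1) (1::'a) = 0"
    by (simp add: vs.scale_left_diff_distrib)
  then show ?thesis by simp
qed

lemma bilinear_antipode_mult: "bilinear_map scale scale (\<lambda>x y. S x * y)"
  by (rule bilinear_mapI[OF linear_map_compose[OF antipode_linear linear_mult_right] linear_mult_left])

lemma antipode_one: "S 1 = 1"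
  using coproduct_one[OF vs.vector_space_axioms bilinear_antipode_mult] antipode_left[of 1]
  by (simp add: counit_one)

lemma counit_mult: "\<epsilon> (a * b) = \<epsilon> a * \<epsilon> b"
proof -
  have B: "bilinear_map scale (*) (\<lambda>x y. \<epsilon> x * \<epsilon> y)"
    by (rule bilinear_mapI)
      (simp_all add: linear_iff_scalar linear_map_add[OF counit_linear]
        linear_map_scale[OF counit_linear] algebra_simps)
  have "(\<Sum>(x,y)\<leftarrow>\<Delta> a. \<epsilon> x * \<epsilon> (y * b)) = \<epsilon> (a * b)"
    by (rule counit_left_linear[OF linear_map_compose[OF linear_mult_right counit_linear]])
  moreover have "(\<Sum>(x,y)\<leftarrow>\<Delta> b. \<epsilon> (a * x) * \<epsilon> y) = \<epsilon> (a * b)"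
    using counit_right_linear[OF linear_map_compose[OF linear_mult_left counit_linear]]
    by (simp add: mult.commute)
  ultimately show ?thesis
    using coproduct_mult[OF vector_space_field_self B, of a b] counit_left_linear[OF counit_linear]
    by simp
qed

lemma counit_antipode: "\<epsilon> (S a) = \<epsilon> a"
proof -
  have "\<epsilon> (S a) = (\<Sum>(x,y)\<leftarrow>\<Delta> a. \<epsilon> (S x) * \<epsilon> y)"
    using counit_right_linear[OF linear_map_compose[OF antipode_linear counit_linear]]
    by (simp add: mult.commute)
  also have "\<dots> = \<epsilon> (\<Sum>(x,y)\<leftarrow>\<Delta> a. S x * y)"
    by (simp add: linear_map_sum_list[OF counit_linear] split_def counit_mult)
  also have "\<dots> = \<epsilon> a"
    by (simp add: antipode_left linear_map_scale[OF counit_linear] counit_one)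
  finally show ?thesis .
qed

lemma sum_antipode_mult_left:
  assumes "\<epsilon> a = 0"
  shows "(\<Sum>(x,y)\<leftarrow>\<Delta> b. S (a * x) * y) = S a * b"
proof -
  have "(\<Sum>(x,y)\<leftarrow>\<Delta> a. S x * (y * b)) = (\<Sum>(x,y)\<leftarrow>\<Delta> a. S x * y) * b"
    by (simp add: sum_list_mult_const[symmetric] split_def mult.assoc)
  also have "\<dots> = 0" by (simp add: antipode_left assms)
  finally have "(\<Sum>(x,y)\<leftarrow>\<Delta> a. S x * (y * b)) = 0" .
  moreover have "(\<Sum>(x,y)\<leftarrow>\<Delta> (a * b). S x * y) = 0"
    by (simp add: antipode_left counit_mult assms)
  ultimately show ?thesis
    using coproduct_mult[OF vs.vector_space_axioms bilinear_antipode_mult, of a b] by simp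
qed

text \<open>Both sides arise from \<open>\<Sum> S(a b\<^sub>1) b\<^sub>2 S(b\<^sub>3)\<close>, bracketed once
  by the previous lemma and once by the antipode identity.\<close>

lemma antipode_mult_Ker_eps:
  assumes "\<epsilon> a = 0"
  shows "S (a * b) = scale (\<epsilon> b) (S a)"
proof -
  have T: "trilinear_map scale scale (\<lambda>p q r. S (a * p) * (q * S r))"
    by (rule trilinear_mapI)
      (auto intro!: linear_map_compose[OF linear_mult_left] linear_map_compose[OF antipode_linear]
        linear_map_compose[OF linear_mult_right] linear_mult_left linear_mult_right)
  have "(\<Sum>(x,y)\<leftarrow>\<Delta> b. \<Sum>(u,v)\<leftarrow>\<Delta> x. S (a * u) * (v * S y))
      = (\<Sum>(x,y)\<leftarrow>\<Delta> b. (\<Sum>(u,v)\<leftarrow>\<Delta> x. S (a * u) * v) * S y)"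
    by (simp add: sum_list_mult_const[symmetric] split_def mult.assoc)
  also have "\<dots> = (\<Sum>(x,y)\<leftarrow>\<Delta> b. S a * (x * S y))"
    by (simp add: sum_antipode_mult_left[OF assms] mult.assoc)
  also have "\<dots> = S a * (\<Sum>(x,y)\<leftarrow>\<Delta> b. x * S y)"
    by (simp add: sum_list_const_mult split_def)
  finally have "(\<Sum>(x,y)\<leftarrow>\<Delta> b. \<Sum>(u,v)\<leftarrow>\<Delta> x. S (a * u) * (v * S y)) = scale (\<epsilon> b) (S a)"
    by (simp add: antipode_right scale_mult_right[symmetric])
  moreover have "(\<Sum>(x,y)\<leftarrow>\<Delta> b. \<Sum>(u,v)\<leftarrow>\<Delta> y. S (a * x) * (u * S v)) = S (a * b)"
  proof -
    have "(\<Sum>(x,y)\<leftarrow>\<Delta> b. \<Sum>(u,v)\<leftarrow>\<Delta> y. S (a * x) * (u * S v))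
        = (\<Sum>(x,y)\<leftarrow>\<Delta> b. S (a * x) * (\<Sum>(u,v)\<leftarrow>\<Delta> y. u * S v))"
      by (simp add: sum_list_const_mult split_def)
    also have "\<dots> = (\<Sum>(x,y)\<leftarrow>\<Delta> b. scale (\<epsilon> y) (S (a * x)))"
      by (simp add: antipode_right scale_mult_right[symmetric])
    finally show ?thesis
      by (simp add: counit_right_linear[OF linear_map_compose[OF linear_mult_left antipode_linear]])
  qed
  ultimately show ?thesis
    using coproduct_coassoc[OF vs.vector_space_axioms T, of b] by simp
qed

lemma Ker_eps_subspace: "vs.subspace (Ker_eps \<epsilon>)"
  unfolding vs.subspace_def Ker_eps_def
  by (simp add: linear_map_zero[OF counit_linear] linear_map_add[OF counit_linear]
      linear_map_scale[OF counit_linear])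

lemma Ker_eps_sq_subset: "Ker_eps_sq scale \<epsilon> \<subseteq> Ker_eps \<epsilon>"
  unfolding Ker_eps_sq_def
  by (rule vs.span_minimal[OF _ Ker_eps_subspace]) (auto simp: Ker_eps_def counit_mult)

lemma antipode_Ker_eps_sq: "x \<in> Ker_eps_sq scale \<epsilon> \<Longrightarrow> S x = 0"
proof -
  have "vs.subspace {x. S x = 0}"
    unfolding vs.subspace_def
    by (simp add: linear_map_zero[OF antipode_linear] linear_map_add[OF antipode_linear]
        linear_map_scale[OF antipode_linear])
  then have "Ker_eps_sq scale \<epsilon> \<subseteq> {x. S x = 0}"
    unfolding Ker_eps_sq_def
    by (rule vs.span_minimal[rotated]) (auto simp: Ker_eps_def antipode_mult_Ker_eps)
  then show "x \<in> Ker_eps_sq scale \<epsilon> \<Longrightarrow> S x = 0" by blast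
qed

lemma Prim_teq2: "x \<in> Prim scale \<Delta> \<Longrightarrow> teq2 scale (\<Delta> x) [(x, 1), (1, x)]"
  by (simp add: Prim_def)

lemma counit_Prim: "x \<in> Prim scale \<Delta> \<Longrightarrow> \<epsilon> x = 0"
  using teq2_sum_eq[OF Prim_teq2 vs.vector_space_axioms
      bilinear_mapI[OF linear_counit_scale_left vs.linear_scale_self]] counit_left[of x]
  by (simp add: counit_one)

lemma antipode_Prim: "x \<in> Prim scale \<Delta> \<Longrightarrow> S x = - x"
  using teq2_sum_eq[OF Prim_teq2 vs.vector_space_axioms bilinear_antipode_mult] antipode_left[of x]
  by (simp add: counit_Prim antipode_one eq_neg_iff_add_eq_0)

text \<open>With \<open>\<pi> x = x - \<epsilon>(x) 1\<close> the projection onto \<open>Ker \<epsilon>\<close>, the sum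
  \<open>\<Sum> \<pi>(k\<^sub>1) S(\<pi>(k\<^sub>2))\<close> lies in \<open>Ker(\<epsilon>)\<^sup>2\<close> and expands to \<open>-(k + S k)\<close>.\<close>

lemma add_antipode_Ker_eps_sq:
  assumes "\<epsilon> k = 0"
  shows "k + S k \<in> Ker_eps_sq scale \<epsilon>"
proof -
  define \<pi> where "\<pi> x = x - scale (\<epsilon> x) 1" for x
  have \<pi>_Ker: "\<epsilon> (\<pi> x) = 0" for x
    by (simp add: \<pi>_def linear_map_diff[OF counit_linear] linear_map_scale[OF counit_linear] counit_one)
  have expand: "\<pi> x * S (\<pi> y) = x * S y - scale (\<epsilon> y) x - scale (\<epsilon> x) (S y) + scale (\<epsilon> x * \<epsilon> y) 1"
    for x y
    by (simp add: \<pi>_def linear_map_diff[OF antipode_linear] linear_map_scale[OF antipode_linear]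
        antipode_one algebra_simps scale_mult_left[symmetric] scale_mult_right[symmetric])
  have "(\<Sum>(x,y)\<leftarrow>\<Delta> k. scale (\<epsilon> x * \<epsilon> y) 1) = (0::'a)"
    using counit_left_linear[OF counit_linear, of k] assms by (simp add: vs.scale_sum_list_left[symmetric] split_def)
  then have "(\<Sum>(x,y)\<leftarrow>\<Delta> k. \<pi> x * S (\<pi> y)) = - (k + S k)"
    using counit_left_linear[OF antipode_linear, of k]
    by (simp add: expand split_def sum_list_addf sum_list_subtractf
        antipode_right[unfolded split_def] counit_right[unfolded split_def] assms)
  moreover have "(\<Sum>(x,y)\<leftarrow>\<Delta> k. \<pi> x * S (\<pi> y)) \<in> Ker_eps_sq scale \<epsilon>"
    unfolding Ker_eps_sq_def
  proof (rule vs.span_sum_list, intro vs.span_base)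
    fix p :: "'a \<times> 'a"
    have "\<epsilon> (\<pi> (fst p)) = 0" "\<epsilon> (S (\<pi> (snd p))) = 0"
      by (simp_all add: \<pi>_Ker counit_antipode)
    then show "(\<lambda>(x,y). \<pi> x * S (\<pi> y)) p \<in> {x * y |x y. x \<in> Ker_eps \<epsilon> \<and> y \<in> Ker_eps \<epsilon>}"
      by (auto simp: Ker_eps_def split_def)
  qed
  ultimately have "- (- (k + S k)) \<in> Ker_eps_sq scale \<epsilon>"
    unfolding Ker_eps_sq_def by (simp only: vs.span_neg)
  then show ?thesis by (simp add: add.commute)
qed

definition eval_coproduct :: "('a \<Rightarrow> 'a \<Rightarrow> 'k) \<Rightarrow> 'a \<Rightarrow> 'k" where
  "eval_coproduct \<beta> c = (\<Sum>(x,y)\<leftarrow>\<Delta> c. \<beta> x y)"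

lemma Prim_iff_eval_coproduct:
  "x \<in> Prim scale \<Delta> \<longleftrightarrow>
   (\<forall>\<beta>. bilinear_map scale (*) \<beta> \<longrightarrow> eval_coproduct \<beta> x = \<beta> x 1 + \<beta> 1 x)"
  by (simp add: Prim_def teq2_def eval_coproduct_def bilinear_form_iff_bilinear_map)

context
  fixes \<beta> :: "'a \<Rightarrow> 'a \<Rightarrow> 'k"
  assumes \<beta>: "bilinear_map scale (*) \<beta>"
begin

private lemmas linear_\<beta>_left = bilinear_map_linear_left[OF \<beta>]
  and linear_\<beta>_right = bilinear_map_linear_right[OF \<beta>]

lemma bilinear_mult_right: "bilinear_map scale (*) (\<lambda>p q. \<beta> p (q * c))"
  by (rule bilinear_mapI[OF linear_\<beta>_left linear_map_compose[OF linear_mult_right linear_\<beta>_right]])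

lemma linear_eval_coproduct: "Vector_Spaces.linear scale (*) (eval_coproduct \<beta>)"
  unfolding eval_coproduct_def by (rule coproduct_linear[OF vector_space_field_self \<beta>])

lemma linear_eval_coproduct_mult_right:
  "Vector_Spaces.linear scale (*) (\<lambda>c. eval_coproduct (\<lambda>p q. \<beta> p (q * c)) w)"
  unfolding linear_iff_scalar eval_coproduct_def
  by (simp add: distrib_left linear_map_add[OF linear_\<beta>_right] sum_list_addf scale_mult_right[symmetric]
      linear_map_scale[OF linear_\<beta>_right] sum_list_const_mult split_def)

text \<open>Pair the coproduct of \<open>S(c\<^sub>1) c\<^sub>2 = \<epsilon>(c) 1\<close> with \<open>\<beta>\<close>
  and expand with the infinitesimal Leibniz rule.\<close>

lemma eval_coproduct_antipode_mult:
  "(\<Sum>(x,y)\<leftarrow>\<Delta> c. eval_coproduct (\<lambda>p q. \<beta> p (q * y)) (S x))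
   = \<epsilon> c * \<beta> 1 1 - \<beta> 1 c + (\<Sum>(x,y)\<leftarrow>\<Delta> c. \<beta> (S x) y)"
proof -
  have T: "trilinear_map scale (*) (\<lambda>x u v. \<beta> (S x * u) v)"
    by (rule trilinear_mapI[OF linear_map_compose[OF linear_map_compose[OF antipode_linear
          linear_mult_right] linear_\<beta>_left] linear_map_compose[OF linear_mult_left linear_\<beta>_left] linear_\<beta>_right])
  have middle: "(\<Sum>(x,y)\<leftarrow>\<Delta> c. \<Sum>(u,v)\<leftarrow>\<Delta> y. \<beta> (S x * u) v) = \<beta> 1 c"
  proof -
    have "(\<Sum>(x,y)\<leftarrow>\<Delta> c. \<Sum>(u,v)\<leftarrow>\<Delta> y. \<beta> (S x * u) v)
        = (\<Sum>(x,y)\<leftarrow>\<Delta> c. \<beta> (\<Sum>(u,v)\<leftarrow>\<Delta> x. S u * v) y)"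
      using coproduct_coassoc[OF vector_space_field_self T, of c]
      by (simp add: linear_map_sum_list[OF linear_\<beta>_left] split_def)
    also have "\<dots> = (\<Sum>(x,y)\<leftarrow>\<Delta> c. \<epsilon> x * \<beta> 1 y)"
      by (simp add: antipode_left linear_map_scale[OF linear_\<beta>_left])
    finally show ?thesis
      by (simp add: counit_left_linear[OF linear_\<beta>_right])
  qed
  have "\<epsilon> c * \<beta> 1 1 = eval_coproduct \<beta> (\<Sum>(x,y)\<leftarrow>\<Delta> c. S x * y)"
    using coproduct_one[OF vector_space_field_self \<beta>]
    by (simp add: antipode_left linear_map_scale[OF linear_eval_coproduct] eval_coproduct_def[of _ 1])
  also have "\<dots> = (\<Sum>(x,y)\<leftarrow>\<Delta> c. eval_coproduct \<beta> (S x * y))"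
    by (simp add: linear_map_sum_list[OF linear_eval_coproduct] split_def)
  also have "\<dots> = (\<Sum>(x,y)\<leftarrow>\<Delta> c. eval_coproduct (\<lambda>p q. \<beta> p (q * y)) (S x)
      + (\<Sum>(u,v)\<leftarrow>\<Delta> y. \<beta> (S x * u) v) - \<beta> (S x) y)"
    unfolding eval_coproduct_def by (simp add: coproduct_mult[OF vector_space_field_self \<beta>])
  also have "\<dots> = (\<Sum>(x,y)\<leftarrow>\<Delta> c. eval_coproduct (\<lambda>p q. \<beta> p (q * y)) (S x))
      + \<beta> 1 c - (\<Sum>(x,y)\<leftarrow>\<Delta> c. \<beta> (S x) y)"
    using middle by (simp add: split_def sum_list_addf sum_list_subtractf)
  finally show ?thesis by (simp add: algebra_simps)
qed

lemma sum_iterated_coproduct_antipode: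
  "(\<Sum>(x,y)\<leftarrow>\<Delta> k. \<Sum>(u,v)\<leftarrow>\<Delta> x. \<beta> (S u) (v * S y)) = \<beta> (S k) 1"
proof -
  have T: "trilinear_map scale (*) (\<lambda>u v y. \<beta> (S u) (v * S y))"
    by (rule trilinear_mapI[OF linear_map_compose[OF antipode_linear linear_\<beta>_left]
          linear_map_compose[OF linear_mult_right linear_\<beta>_right]
          linear_map_compose[OF linear_map_compose[OF antipode_linear linear_mult_left] linear_\<beta>_right]])
  have "(\<Sum>(x,y)\<leftarrow>\<Delta> k. \<Sum>(u,v)\<leftarrow>\<Delta> x. \<beta> (S u) (v * S y))
      = (\<Sum>(x,y)\<leftarrow>\<Delta> k. \<beta> (S x) (\<Sum>(u,v)\<leftarrow>\<Delta> y. u * S v))"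
    using coproduct_coassoc[OF vector_space_field_self T, of k]
    by (simp add: linear_map_sum_list[OF linear_\<beta>_right] split_def)
  also have "\<dots> = (\<Sum>(x,y)\<leftarrow>\<Delta> k. \<epsilon> y * \<beta> (S x) 1)"
    by (simp add: antipode_right linear_map_scale[OF linear_\<beta>_right])
  finally show ?thesis
    by (simp add: counit_right_linear[OF linear_map_compose[OF antipode_linear linear_\<beta>_left]])
qed

end

text \<open>Write
  \<open>S k = \<Sum> S(k\<^sub>1) k\<^sub>2 S(k\<^sub>3)\<close>, expand the product \<open>S(k\<^sub>1) k\<^sub>2\<close> by
  \<open>eval_coproduct_antipode_mult\<close> and collapse the three resulting sums with the (co)unit identities.\<close>

lemma eval_coproduct_antipode:
  assumes \<beta>: "bilinear_map scale (*) \<beta>"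
  shows "eval_coproduct \<beta> (S k) = \<beta> (S k) 1 + \<beta> 1 (S k) - \<epsilon> k * \<beta> 1 1"
proof -
  note linear_\<beta>_left = bilinear_map_linear_left[OF \<beta>]
    and linear_\<beta>_right = bilinear_map_linear_right[OF \<beta>]
  define \<Psi> where "\<Psi> w c = eval_coproduct (\<lambda>p q. \<beta> p (q * c)) w" for w c
  have \<Psi>_linear: "Vector_Spaces.linear scale (*) (\<lambda>c. \<Psi> w c)" for w
    unfolding \<Psi>_def by (rule linear_eval_coproduct_mult_right[OF \<beta>])
  have T: "trilinear_map scale (*) (\<lambda>x u v. \<Psi> (S x) (u * S v))"
    unfolding \<Psi>_def
    by (rule trilinear_mapI[OF
          linear_map_compose[OF antipode_linear linear_eval_coproduct[OF bilinear_mult_right[OF \<beta>]]]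
          linear_map_compose[OF linear_mult_right linear_eval_coproduct_mult_right[OF \<beta>]]
          linear_map_compose[OF linear_map_compose[OF antipode_linear linear_mult_left]
            linear_eval_coproduct_mult_right[OF \<beta>]]])
  have "eval_coproduct \<beta> (S k) = eval_coproduct \<beta> (S (\<Sum>(x,y)\<leftarrow>\<Delta> k. scale (\<epsilon> y) x))"
    by (simp add: counit_right)
  also have "\<dots> = (\<Sum>(x,y)\<leftarrow>\<Delta> k. \<Psi> (S x) (scale (\<epsilon> y) 1))"
    by (simp add: \<Psi>_def linear_map_sum_list[OF antipode_linear] linear_map_scale[OF antipode_linear]
        linear_map_sum_list[OF linear_eval_coproduct[OF \<beta>]] linear_map_scale[OF linear_eval_coproduct[OF \<beta>]]
        linear_map_scale[OF \<Psi>_linear[unfolded \<Psi>_def]] split_def)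
  also have "\<dots> = (\<Sum>(x,y)\<leftarrow>\<Delta> k. \<Sum>(u,v)\<leftarrow>\<Delta> y. \<Psi> (S x) (u * S v))"
    by (simp add: antipode_right[symmetric] linear_map_sum_list[OF \<Psi>_linear] split_def)
  also have "\<dots> = (\<Sum>(x,y)\<leftarrow>\<Delta> k. \<Sum>(u,v)\<leftarrow>\<Delta> x. \<Psi> (S u) (v * S y))"
    using coproduct_coassoc[OF vector_space_field_self T, of k] by simp
  also have "\<dots> = (\<Sum>(x,y)\<leftarrow>\<Delta> k. \<epsilon> x * \<beta> 1 (S y) - \<beta> 1 (x * S y)
      + (\<Sum>(u,v)\<leftarrow>\<Delta> x. \<beta> (S u) (v * S y)))"
    using eval_coproduct_antipode_mult[OF bilinear_mult_right[OF \<beta>]]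
    by (simp add: \<Psi>_def mult.assoc)
  also have "\<dots> = \<beta> 1 (S k) - \<epsilon> k * \<beta> 1 1 + \<beta> (S k) 1"
    using counit_left_linear[OF linear_map_compose[OF antipode_linear linear_\<beta>_right[of 1]], of k]
      arg_cong[OF antipode_right[of k], of "\<beta> 1"] sum_iterated_coproduct_antipode[OF \<beta>, of k]
    by (simp add: linear_map_sum_list[OF linear_\<beta>_right] linear_map_scale[OF linear_\<beta>_right]
        split_def sum_list_addf sum_list_subtractf)
  finally show ?thesis by simp
qed

lemma neg_antipode_Prim:
  assumes "\<epsilon> k = 0"
  shows "- S k \<in> Prim scale \<Delta>"
  unfolding Prim_iff_eval_coproduct
proof (intro allI impI)
  fix \<beta> :: "'a \<Rightarrow> 'a \<Rightarrow> 'k" assume \<beta>: "bilinear_map scale (*) \<beta>"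
  show "eval_coproduct \<beta> (- S k) = \<beta> (- S k) 1 + \<beta> 1 (- S k)"
    using eval_coproduct_antipode[OF \<beta>, of k] assms
    by (simp add: linear_map_neg[OF linear_eval_coproduct[OF \<beta>]]
        linear_map_neg[OF bilinear_map_linear_left[OF \<beta>]] linear_map_neg[OF bilinear_map_linear_right[OF \<beta>]])
qed

lemma Prim_inter_Ker_eps_sq: "Prim scale \<Delta> \<inter> Ker_eps_sq scale \<epsilon> = {0}"
proof
  show "Prim scale \<Delta> \<inter> Ker_eps_sq scale \<epsilon> \<subseteq> {0}"
    using antipode_Prim antipode_Ker_eps_sq by fastforce
  have "0 \<in> Prim scale \<Delta>"
    using neg_antipode_Prim[of 0]
    by (simp add: linear_map_zero[OF counit_linear] linear_map_zero[OF antipode_linear])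
  moreover have "0 \<in> Ker_eps_sq scale \<epsilon>"
    unfolding Ker_eps_sq_def by (rule vs.span_zero)
  ultimately show "{0} \<subseteq> Prim scale \<Delta> \<inter> Ker_eps_sq scale \<epsilon>" by simp
qed

end

theorem corollary5:
  fixes scale :: "'k::field \<Rightarrow> 'a::ring_1 \<Rightarrow> 'a"
    and \<Delta> :: "'a \<Rightarrow> ('a \<times> 'a) list" and \<epsilon> :: "'a \<Rightarrow> 'k" and S :: "'a \<Rightarrow> 'a"
  assumes "inf_bialgebra scale \<Delta> \<epsilon>"
    and "is_antipode scale \<Delta> \<epsilon> S"
  shows "Prim scale \<Delta> \<subseteq> Ker_eps \<epsilon>
    \<and> Ker_eps_sq scale \<epsilon> \<subseteq> Ker_eps \<epsilon>
    \<and> Prim scale \<Delta> \<inter> Ker_eps_sq scale \<epsilon> = {0}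
    \<and> (\<forall>k \<in> Ker_eps \<epsilon>. \<exists>p \<in> Prim scale \<Delta>. \<exists>q \<in> Ker_eps_sq scale \<epsilon>. k = p + q)
    \<and> (\<forall>k \<in> Ker_eps \<epsilon>. - S k \<in> Prim scale \<Delta> \<and> k - (- S k) \<in> Ker_eps_sq scale \<epsilon>)"
proof -
  interpret infinitesimal_hopf scale \<Delta> \<epsilon> S
    using assms by (rule infinitesimal_hopf.intro)
  have projection: "- S k \<in> Prim scale \<Delta> \<and> k - (- S k) \<in> Ker_eps_sq scale \<epsilon>" if "k \<in> Ker_eps \<epsilon>" for k
    using that neg_antipode_Prim add_antipode_Ker_eps_sq by (simp add: Ker_eps_def)
  have "k = - S k + (k - - S k)" for k :: 'a by simp
  then have "\<exists>p \<in> Prim scale \<Delta>. \<exists>q \<in> Ker_eps_sq scale \<epsilon>. k = p + q" if "k \<in> Ker_eps \<epsilon>" for k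
    using projection[OF that] by blast
  moreover have "Prim scale \<Delta> \<subseteq> Ker_eps \<epsilon>"
    using counit_Prim by (auto simp: Ker_eps_def)
  ultimately show ?thesis
    using projection Ker_eps_sq_subset Prim_inter_Ker_eps_sq by blast
qed

end
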